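(* Let $\mathcal P_X$ and $\mathcal P_Y$ be probability measures on a common measurable space $(E,\mathcal E)$ with $\mathcal P_Y\ll\mathcal P_X$, and let $L=d\mathcal P_Y/d\mathcal P_X$ be the Radon–Nikodym derivative. Assume that $L(\mathbf Z)$ has a continuous distribution when $\mathbf Z\sim\mathcal P_X$. Let $\mathbf Z_X\sim\mathcal P_X$ and $\mathbf Z_Y\sim\mathcal P_Y$ be independent. Then $$\tfrac12\, d_{tv}(\mathcal P_X,\mathcal P_Y)\;\le\;\mathbb P\big(L(\mathbf Z_X)<L(\mathbf Z_Y)\big)-\tfrac12\;\le\; d_{tv}(\mathcal P_X,\mathcal P_Y).$$
   Context: $d_{tv}(\mathcal P_X,\mathcal P_Y)=\sup_{A\in\mathcal E}|\mathcal P_Y(A)-\mathcal P_X(A)|$ denotes the total variation distance. *)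

theory Defs
  imports "HOL-Probability.Probability"
begin

definition tv_dist :: "'a measure \<Rightarrow> 'a measure \<Rightarrow> real" where
  "tv_dist PX PY = (SUP A \<in> sets PX. \<bar>measure PY A - measure PX A\<bar>)"

end

theory Submission
  imports Defs
begin

text \<open>
  With \<open>l = dP\<^sub>Y/dP\<^sub>X\<close>, Scheffe's identity gives \<open>d\<^sub>t\<^sub>v = \<integral>(l - 1)\<^sup>+ dP\<^sub>X\<close>.
  For independent \<open>X, X' \<sim> P\<^sub>X\<close> the probability in question is \<open>p = E[1{l X < l X'} l X']\<close>;
  swapping \<open>X\<close> and \<open>X'\<close> turns \<open>1 - p\<close> (ties being null) into \<open>E[1{l X < l X'} l X]\<close>, so
  \<open>p - 1/2 = G/2\<close> with \<open>G = E[(l X' - l X)\<^sup>+]\<close>. Restricting \<open>G\<close> to \<open>l X' > 1\<close> and integrating out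
  \<open>X\<close> gives \<open>d\<^sub>t\<^sub>v \<le> G\<close>, and \<open>(b - a)\<^sup>+ \<le> (b - 1)\<^sup>+ + (1 - a)\<^sup>+\<close> gives \<open>G \<le> 2 d\<^sub>t\<^sub>v\<close>.
\<close>

lemma measure_density_eq_integral:
  fixes g :: "'a \<Rightarrow> real"
  assumes "integrable M g" and "\<And>x. 0 \<le> g x" and "A \<in> sets M"
  shows "measure (density M g) A = (\<integral>x. g x * indicator A x \<partial>M)"
proof -
  have "emeasure (density M g) A = (\<integral>\<^sup>+x. ennreal (g x * indicator A x) \<partial>M)"
    using assms by (auto simp: emeasure_density intro!: nn_integral_cong split: split_indicator)
  also have "\<dots> = ennreal (\<integral>x. g x * indicator A x \<partial>M)"
    using assms by (intro nn_integral_eq_integral integrable_real_mult_indicator) auto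
  finally show ?thesis
    using assms by (simp add: measure_def integral_nonneg)
qed

lemma (in pair_sigma_finite)
  fixes g :: "'a \<Rightarrow> real" and h :: "'b \<Rightarrow> real"
  assumes g: "integrable M1 g" and h: "integrable M2 h"
  shows integrable_product_mult: "integrable (M1 \<Otimes>\<^sub>M M2) (\<lambda>z. g (fst z) * h (snd z))"
    and integral_product_mult:
      "(\<integral>z. g (fst z) * h (snd z) \<partial>(M1 \<Otimes>\<^sub>M M2)) = integral\<^sup>L M1 g * integral\<^sup>L M2 h"
proof -
  have int: "integrable (M1 \<Otimes>\<^sub>M M2) (\<lambda>(x, y). g x * h y)"
  proof (rule Fubini_integrable)
    have "(\<lambda>x. \<integral>y. norm (g x * h y) \<partial>M2) = (\<lambda>x. \<bar>g x\<bar> * (\<integral>y. \<bar>h y\<bar> \<partial>M2))"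
      by (simp add: abs_mult)
    then show "integrable M1 (\<lambda>x. \<integral>y. norm (case (x, y) of (x, y) \<Rightarrow> g x * h y) \<partial>M2)"
      using g by simp
  qed (use g h in auto)
  then show "integrable (M1 \<Otimes>\<^sub>M M2) (\<lambda>z. g (fst z) * h (snd z))"
    by (simp add: split_beta')
  have "integral\<^sup>L (M1 \<Otimes>\<^sub>M M2) (\<lambda>(x, y). g x * h y) = (\<integral>x. (\<integral>y. g x * h y \<partial>M2) \<partial>M1)"
    using integral_fst[OF int] by simp
  then show "(\<integral>z. g (fst z) * h (snd z) \<partial>(M1 \<Otimes>\<^sub>M M2)) = integral\<^sup>L M1 g * integral\<^sup>L M2 h"
    by (simp add: split_beta')
qed

context pair_prob_space
begin

lemma
  fixes g :: "'a \<Rightarrow> real"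
  assumes "integrable M1 g"
  shows integrable_fst_comp: "integrable (M1 \<Otimes>\<^sub>M M2) (\<lambda>z. g (fst z))"
    and integral_fst_comp: "(\<integral>z. g (fst z) \<partial>(M1 \<Otimes>\<^sub>M M2)) = integral\<^sup>L M1 g"
  using integrable_product_mult[OF assms, of "\<lambda>_. 1"] integral_product_mult[OF assms, of "\<lambda>_. 1"]
  by (simp_all add: M2.prob_space)

lemma
  fixes h :: "'b \<Rightarrow> real"
  assumes "integrable M2 h"
  shows integrable_snd_comp: "integrable (M1 \<Otimes>\<^sub>M M2) (\<lambda>z. h (snd z))"
    and integral_snd_comp: "(\<integral>z. h (snd z) \<partial>(M1 \<Otimes>\<^sub>M M2)) = integral\<^sup>L M2 h"
  using integrable_product_mult[OF _ assms, of "\<lambda>_. 1"] integral_product_mult[OF _ assms, of "\<lambda>_. 1"]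
  by (simp_all add: M1.prob_space)

end

locale prob_density = prob_space M for M :: "'a measure" +
  fixes f :: "'a \<Rightarrow> real"
  assumes f_nonneg: "\<And>x. 0 \<le> f x"
    and f_integrable: "integrable M f"
    and f_integral: "integral\<^sup>L M f = 1"
begin

lemma f_measurable[measurable]: "f \<in> borel_measurable M"
  using f_integrable by simp

sublocale MM: pair_prob_space M M
  by unfold_locales

lemma integrable_excess: "integrable M (\<lambda>x. max 0 (f x - 1))"
  by (rule Bochner_Integration.integrable_bound[of _ "\<lambda>x. f x + 1"])
    (use f_integrable f_nonneg in auto)

lemma integrable_deficit: "integrable M (\<lambda>x. max 0 (1 - f x))"
  by (rule Bochner_Integration.integrable_bound[of _ "\<lambda>x. f x + 1"])
    (use f_integrable f_nonneg in auto)

lemma integral_deficit_eq_excess: "(\<integral>x. max 0 (1 - f x) \<partial>M) = (\<integral>x. max 0 (f x - 1) \<partial>M)"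
proof -
  have "(\<integral>x. max 0 (1 - f x) \<partial>M) = (\<integral>x. max 0 (f x - 1) - f x + 1 \<partial>M)"
    by (rule Bochner_Integration.integral_cong) auto
  then show ?thesis
    using integrable_excess f_integrable f_integral by (simp add: prob_space)
qed

lemma measure_density_diff:
  assumes "A \<in> sets M"
  shows "measure (density M f) A - measure M A = (\<integral>x. (f x - 1) * indicator A x \<partial>M)"
proof -
  have "(\<integral>x. (f x - 1) * indicator A x \<partial>M) = (\<integral>x. f x * indicator A x - indicator A x \<partial>M)"
    by (rule Bochner_Integration.integral_cong) (auto simp: algebra_simps)
  also have "\<dots> = (\<integral>x. f x * indicator A x \<partial>M) - measure M A"
    using assms f_integrable
    by (simp add: integrable_real_mult_indicator integrable_indicator_iff less_top[symmetric])
  finally show ?thesis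
    using measure_density_eq_integral[OF f_integrable f_nonneg assms] by simp
qed

theorem tv_dist_density: "tv_dist M (density M f) = (\<integral>x. max 0 (f x - 1) \<partial>M)"
proof -
  let ?d = "\<integral>x. max 0 (f x - 1) \<partial>M"
  have bound: "\<bar>measure (density M f) A - measure M A\<bar> \<le> ?d" if A: "A \<in> sets M" for A
  proof -
    have int: "integrable M (\<lambda>x. (f x - 1) * indicator A x)"
      using A f_integrable by (intro integrable_real_mult_indicator) auto
    have "(\<integral>x. (f x - 1) * indicator A x \<partial>M) \<le> ?d"
      by (rule integral_mono[OF int integrable_excess]) (auto split: split_indicator)
    moreover have "- (\<integral>x. max 0 (1 - f x) \<partial>M) \<le> (\<integral>x. (f x - 1) * indicator A x \<partial>M)"
      unfolding Bochner_Integration.integral_minus[symmetric]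
      by (rule integral_mono[OF integrable_minus[OF integrable_deficit] int])
        (auto split: split_indicator)
    ultimately show ?thesis
      using measure_density_diff[OF A] integral_deficit_eq_excess by linarith
  qed
  define A where "A = {x \<in> space M. 1 < f x}"
  have A: "A \<in> sets M"
    unfolding A_def by measurable
  have "measure (density M f) A - measure M A = ?d"
    unfolding measure_density_diff[OF A]
    by (rule Bochner_Integration.integral_cong) (auto simp: A_def split: split_indicator)
  then have attained: "\<bar>measure (density M f) A - measure M A\<bar> = ?d"
    by (simp add: integral_nonneg)
  show ?thesis
    unfolding tv_dist_def sets_density
  proof (rule antisym)
    show "(SUP A\<in>sets M. \<bar>measure (density M f) A - measure M A\<bar>) \<le> ?d"
      by (rule cSUP_least) (use bound in auto)
    show "?d \<le> (SUP A\<in>sets M. \<bar>measure (density M f) A - measure M A\<bar>)"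
      using cSUP_upper[OF A bdd_aboveI2[of _ "\<lambda>A. \<bar>measure (density M f) A - measure M A\<bar>", OF bound]]
        attained by simp
  qed
qed

lemma measure_pair_density:
  assumes "S \<in> sets (M \<Otimes>\<^sub>M M)"
  shows "measure (M \<Otimes>\<^sub>M density M f) S = (\<integral>z. f (snd z) * indicator S z \<partial>(M \<Otimes>\<^sub>M M))"
proof -
  have "sigma_finite_measure (density M f)"
    by (subst sigma_finite_iff_density_finite') auto
  then have "density M (\<lambda>_. 1) \<Otimes>\<^sub>M density M f = density (M \<Otimes>\<^sub>M M) (\<lambda>(x, y). 1 * ennreal (f y))"
    by (intro pair_measure_density) (auto intro: sigma_finite_measure_axioms)
  then have "M \<Otimes>\<^sub>M density M f = density (M \<Otimes>\<^sub>M M) (\<lambda>z. f (snd z))"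
    by (simp add: density_1 split_beta')
  then show ?thesis
    using measure_density_eq_integral[OF MM.integrable_snd_comp[OF f_integrable] _ assms]
    by (simp add: f_nonneg)
qed

lemma integrable_pair_gap: "integrable (M \<Otimes>\<^sub>M M) (\<lambda>z. max 0 (f (snd z) - f (fst z)))"
  by (rule Bochner_Integration.integrable_bound[OF MM.integrable_snd_comp[OF f_integrable]])
    (auto simp: f_nonneg)

lemma integral_excess_le_pair_gap:
  "(\<integral>x. max 0 (f x - 1) \<partial>M) \<le> (\<integral>z. max 0 (f (snd z) - f (fst z)) \<partial>(M \<Otimes>\<^sub>M M))"
proof -
  define h where "h x = (of_bool (1 < f x) :: real)" for x
  have int_h: "integrable M h"
    unfolding h_def by (rule Bochner_Integration.integrable_bound[of _ "\<lambda>_. 1::real"]) auto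
  have int_hf: "integrable M (\<lambda>x. h x * f x)"
    unfolding h_def by (rule Bochner_Integration.integrable_bound[OF f_integrable]) (auto simp: f_nonneg)
  note int1 = MM.integrable_snd_comp[OF int_hf]
  note int2 = MM.integrable_product_mult[OF f_integrable int_h]
  have "(\<integral>x. max 0 (f x - 1) \<partial>M) = (\<integral>x. h x * f x - h x \<partial>M)"
    by (rule Bochner_Integration.integral_cong) (auto simp: h_def)
  also have "\<dots> = (\<integral>z. h (snd z) * f (snd z) - f (fst z) * h (snd z) \<partial>(M \<Otimes>\<^sub>M M))"
    using int_h int_hf int1 int2 MM.integral_snd_comp[OF int_hf]
      MM.integral_product_mult[OF f_integrable int_h]
    by (simp add: f_integral)
  also have "\<dots> \<le> (\<integral>z. max 0 (f (snd z) - f (fst z)) \<partial>(M \<Otimes>\<^sub>M M))"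
    by (rule integral_mono[OF Bochner_Integration.integrable_diff[OF int1 int2] integrable_pair_gap])
      (auto simp: h_def algebra_simps)
  finally show ?thesis .
qed

lemma integral_pair_gap_le_twice_excess:
  "(\<integral>z. max 0 (f (snd z) - f (fst z)) \<partial>(M \<Otimes>\<^sub>M M)) \<le> 2 * (\<integral>x. max 0 (f x - 1) \<partial>M)"
proof -
  note int1 = MM.integrable_snd_comp[OF integrable_excess]
  note int2 = MM.integrable_fst_comp[OF integrable_deficit]
  have "(\<integral>z. max 0 (f (snd z) - f (fst z)) \<partial>(M \<Otimes>\<^sub>M M))
      \<le> (\<integral>z. max 0 (f (snd z) - 1) + max 0 (1 - f (fst z)) \<partial>(M \<Otimes>\<^sub>M M))"
    by (rule integral_mono[OF integrable_pair_gap Bochner_Integration.integrable_add[OF int1 int2]])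
      auto
  also have "\<dots> = 2 * (\<integral>x. max 0 (f x - 1) \<partial>M)"
    using int1 int2 integral_deficit_eq_excess
      MM.integral_snd_comp[OF integrable_excess]
      MM.integral_fst_comp[OF integrable_deficit]
    by simp
  finally show ?thesis .
qed

lemma integral_pair_ties_eq_0:
  assumes no_atoms: "\<And>c. measure M {x \<in> space M. f x = c} = 0"
  shows "(\<integral>z. of_bool (f (fst z) = f (snd z)) * f (snd z) \<partial>(M \<Otimes>\<^sub>M M)) = 0"
proof -
  have "integrable (M \<Otimes>\<^sub>M M) (\<lambda>z. of_bool (f (fst z) = f (snd z)) * f (snd z))"
    by (rule Bochner_Integration.integrable_bound[OF MM.integrable_snd_comp[OF f_integrable]])
      (auto simp: f_nonneg)
  then have "(\<integral>z. of_bool (f (fst z) = f (snd z)) * f (snd z) \<partial>(M \<Otimes>\<^sub>M M))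
      = (\<integral>y. (\<integral>x. of_bool (f x = f y) * f y \<partial>M) \<partial>M)"
    using MM.integral_snd[of "\<lambda>x y. of_bool (f x = f y) * f y"] by (simp add: split_beta')
  also have "\<dots> = (\<integral>y. measure M {x \<in> space M. f x = f y} * f y \<partial>M)"
  proof (rule Bochner_Integration.integral_cong)
    fix y
    have "(\<integral>x. of_bool (f x = f y) * f y \<partial>M) = (\<integral>x. indicator {x \<in> space M. f x = f y} x * f y \<partial>M)"
      by (rule Bochner_Integration.integral_cong) (auto split: split_indicator)
    then show "(\<integral>x. of_bool (f x = f y) * f y \<partial>M) = measure M {x \<in> space M. f x = f y} * f y"
      by simp
  qed simp
  finally show ?thesis
    by (simp add: no_atoms)
qed

lemma integral_pair_less_weighted_eq:
  assumes no_atoms: "\<And>c. measure M {x \<in> space M. f x = c} = 0"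
  shows "(\<integral>z. of_bool (f (fst z) < f (snd z)) * f (snd z) \<partial>(M \<Otimes>\<^sub>M M))
    = (1 + (\<integral>z. max 0 (f (snd z) - f (fst z)) \<partial>(M \<Otimes>\<^sub>M M))) / 2"
proof -
  let ?I = "\<lambda>g. \<integral>z. g z \<partial>(M \<Otimes>\<^sub>M M)"
  define P where "P = ?I (\<lambda>z. of_bool (f (fst z) < f (snd z)) * f (snd z))"
  define Q where "Q = ?I (\<lambda>z. of_bool (f (snd z) < f (fst z)) * f (snd z))"
  define Q' where "Q' = ?I (\<lambda>z. of_bool (f (fst z) < f (snd z)) * f (fst z))"
  define E where "E = ?I (\<lambda>z. of_bool (f (fst z) = f (snd z)) * f (snd z))"
  note int_snd = MM.integrable_snd_comp[OF f_integrable]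
  note int_fst = MM.integrable_fst_comp[OF f_integrable]
  have int_P: "integrable (M \<Otimes>\<^sub>M M) (\<lambda>z. of_bool (f (fst z) < f (snd z)) * f (snd z))"
    and int_Q: "integrable (M \<Otimes>\<^sub>M M) (\<lambda>z. of_bool (f (snd z) < f (fst z)) * f (snd z))"
    and int_E: "integrable (M \<Otimes>\<^sub>M M) (\<lambda>z. of_bool (f (fst z) = f (snd z)) * f (snd z))"
    by (rule Bochner_Integration.integrable_bound[OF int_snd]; auto simp: f_nonneg)+
  have int_Q': "integrable (M \<Otimes>\<^sub>M M) (\<lambda>z. of_bool (f (fst z) < f (snd z)) * f (fst z))"
    by (rule Bochner_Integration.integrable_bound[OF int_fst]) (auto simp: f_nonneg)
  have "P + Q + E = ?I (\<lambda>z. of_bool (f (fst z) < f (snd z)) * f (snd z)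
      + of_bool (f (snd z) < f (fst z)) * f (snd z) + of_bool (f (fst z) = f (snd z)) * f (snd z))"
    unfolding P_def Q_def E_def using int_P int_Q int_E by simp
  also have "\<dots> = ?I (\<lambda>z. f (snd z))"
    by (rule Bochner_Integration.integral_cong) auto
  finally have total: "P + Q + E = 1"
    using MM.integral_snd_comp[OF f_integrable] f_integral by simp
  have swap: "Q = Q'"
    unfolding Q_def Q'_def
    using MM.integral_product_swap[of "\<lambda>z. of_bool (f (snd z) < f (fst z)) * f (snd z)"]
    by (simp add: split_beta')
  have "P - Q' = ?I (\<lambda>z. of_bool (f (fst z) < f (snd z)) * f (snd z)
      - of_bool (f (fst z) < f (snd z)) * f (fst z))"
    unfolding P_def Q'_def using int_P int_Q' by simp
  also have "\<dots> = ?I (\<lambda>z. max 0 (f (snd z) - f (fst z)))"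
    by (rule Bochner_Integration.integral_cong) auto
  finally have gap: "P - Q' = ?I (\<lambda>z. max 0 (f (snd z) - f (fst z)))" .
  show ?thesis
    using total swap gap integral_pair_ties_eq_0[OF no_atoms] unfolding P_def E_def by simp
qed

lemma measure_pair_density_less:
  assumes [measurable]: "L \<in> borel_measurable M"
    and finite: "AE x in M. L x \<noteq> \<infinity>"
    and f_eq: "\<And>x. f x = enn2real (L x)"
  shows "measure (M \<Otimes>\<^sub>M density M f) {z \<in> space (M \<Otimes>\<^sub>M M). L (fst z) < L (snd z)}
    = (\<integral>z. of_bool (f (fst z) < f (snd z)) * f (snd z) \<partial>(M \<Otimes>\<^sub>M M))"
proof -
  let ?S = "{z \<in> space (M \<Otimes>\<^sub>M M). L (fst z) < L (snd z)}"
  have S[measurable]: "?S \<in> sets (M \<Otimes>\<^sub>M M)"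
    by measurable
  txt \<open>\<open>f\<close> forgets where \<open>L = \<infinity>\<close>: a null set in the first coordinate, and harmless in the
    second because there the weight \<open>f (snd z)\<close> vanishes.\<close>
  have "AE z in M \<Otimes>\<^sub>M M. L (fst z) \<noteq> \<infinity>"
    by (rule MM.AE_pair_measure) (use finite in auto)
  then have ae_eq: "AE z in M \<Otimes>\<^sub>M M. f (snd z) * indicator ?S z = of_bool (f (fst z) < f (snd z)) * f (snd z)"
  proof (rule AE_mp, intro AE_I2 impI)
    fix z
    assume z: "z \<in> space (M \<Otimes>\<^sub>M M)" and fst_finite: "L (fst z) \<noteq> \<infinity>"
    show "f (snd z) * indicator ?S z = of_bool (f (fst z) < f (snd z)) * f (snd z)"
    proof (cases "L (snd z) = \<infinity>")
      case False
      then have "L (fst z) < L (snd z) \<longleftrightarrow> f (fst z) < f (snd z)"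
        using fst_finite by (simp add: f_eq less_top)
      then show ?thesis
        using z by (simp add: indicator_def)
    qed (simp add: f_eq)
  qed
  show ?thesis
    unfolding measure_pair_density[OF S] by (rule integral_cong_AE[OF _ _ ae_eq]) measurable
qed

end

lemma prob_densityI:
  fixes f :: "'a \<Rightarrow> real"
  assumes "prob_space M" and D: "prob_space (density M f)"
    and [measurable]: "f \<in> borel_measurable M" and nonneg: "\<And>x. 0 \<le> f x"
  shows "prob_density M f"
proof -
  interpret D: prob_space "density M f" by (fact D)
  have "integrable (density M f) (\<lambda>_. 1::real)"
    by simp
  then have "integrable M f"
    by (subst (asm) integrable_density) (auto simp: nonneg)
  have "1 = integral\<^sup>L (density M f) (\<lambda>_. 1::real)"
    using D.prob_space by simp
  then have "integral\<^sup>L M f = 1"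
    by (subst (asm) integral_density) (auto simp: nonneg)
  with assms \<open>integrable M f\<close> show ?thesis
    by (intro prob_density.intro prob_density_axioms.intro)
qed

lemma (in finite_measure) measure_enn2real_level_set_eq_0:
  assumes [measurable]: "L \<in> borel_measurable M"
    and no_atoms: "\<And>t. measure M {x \<in> space M. L x = t} = 0"
  shows "measure M {x \<in> space M. enn2real (L x) = c} = 0"
proof -
  have "measure M {x \<in> space M. enn2real (L x) = c}
      \<le> measure M ({x \<in> space M. L x = ennreal c} \<union> {x \<in> space M. L x = \<infinity>})"
    by (rule finite_measure_mono) (auto simp: less_top)
  also have "\<dots> \<le> measure M {x \<in> space M. L x = ennreal c} + measure M {x \<in> space M. L x = \<infinity>}"
    by (rule measure_subadditive) auto
  finally show ?thesis
    using no_atoms[of "ennreal c"] no_atoms[of \<infinity>] by (simp add: measure_le_0_iff)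
qed

lemma (in sigma_finite_measure) density_enn2real_RN_deriv:
  assumes "sigma_finite_measure N" and "absolutely_continuous M N" and "sets N = sets M"
  shows "density M (\<lambda>x. enn2real (RN_deriv M N x)) = N"
proof -
  have "density M (\<lambda>x. enn2real (RN_deriv M N x)) = density M (RN_deriv M N)"
    using RN_deriv_finite[OF assms] by (intro density_cong) (auto simp: less_top)
  also have "\<dots> = N"
    using assms(2,3) by (rule density_RN_deriv)
  finally show ?thesis .
qed

theorem proposition1:
  fixes PX PY :: "'a measure"
  assumes "prob_space PX" and "prob_space PY"
    and "sets PY = sets PX"
    and "absolutely_continuous PX PY"
    and "\<And>t. measure PX {x \<in> space PX. RN_deriv PX PY x = t} = 0"
  shows "tv_dist PX PY / 2
           \<le> measure (PX \<Otimes>\<^sub>M PY)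
               {z \<in> space (PX \<Otimes>\<^sub>M PY). RN_deriv PX PY (fst z) < RN_deriv PX PY (snd z)} - 1/2
       \<and> measure (PX \<Otimes>\<^sub>M PY)
               {z \<in> space (PX \<Otimes>\<^sub>M PY). RN_deriv PX PY (fst z) < RN_deriv PX PY (snd z)} - 1/2
           \<le> tv_dist PX PY"
proof -
  interpret X: prob_space PX by fact
  interpret Y: prob_space PY by fact
  define L where "L = RN_deriv PX PY"
  define l where "l = (\<lambda>x. enn2real (L x))"
  have PY: "PY = density PX l"
    using X.density_enn2real_RN_deriv[OF Y.sigma_finite_measure_axioms assms(4,3)]
    by (simp add: l_def L_def)
  interpret prob_density PX l
  proof (rule prob_densityI)
    show "prob_space (density PX l)"
      by (fold PY) (fact assms(2))
  qed (simp_all add: X.prob_space_axioms l_def L_def)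
  have no_atoms: "measure PX {x \<in> space PX. l x = c} = 0" for c
    unfolding l_def L_def by (rule X.measure_enn2real_level_set_eq_0) (use assms(5) in simp_all)
  have "measure (PX \<Otimes>\<^sub>M density PX l) {z \<in> space (PX \<Otimes>\<^sub>M PX). L (fst z) < L (snd z)}
      = (\<integral>z. of_bool (l (fst z) < l (snd z)) * l (snd z) \<partial>(PX \<Otimes>\<^sub>M PX))"
    using X.RN_deriv_finite[OF Y.sigma_finite_measure_axioms assms(4,3)]
    by (intro measure_pair_density_less) (simp_all add: l_def L_def)
  then show ?thesis
    using tv_dist_density integral_excess_le_pair_gap integral_pair_gap_le_twice_excess
      integral_pair_less_weighted_eq[OF no_atoms]
    unfolding L_def[symmetric] unfolding PY by (simp add: space_pair_measure)
qed

end
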